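(* Let $n\ge 1$ and let $V,H$ be real $2n\times 2n$ symmetric positive-definite matrices with respective symplectic eigenvalues $\lambda_1^V\ge \lambda_2^V\ge\cdots\ge\lambda_n^V>0$ and $\lambda_1^H\ge\lambda_2^H\ge\cdots\ge\lambda_n^H>0$. Then \[ \inf_{S\in Sp(2n)} \operatorname{tr}(S V S^{T} H) \;=\; 2\sum_{i=1}^{n} \lambda_i^{H}\,\lambda_{n+1-i}^{V}. \]
   Context: Let $J=\begin{bmatrix}0 & \mathbb{I}_n\\ -\mathbb{I}_n & 0\end{bmatrix}$ and $Sp(2n)=\{S\in\mathbb{R}^{2n\times 2n}: S^T J S = J\}$ be the real symplectic group. By Williamson's theorem, for every real symmetric positive-definite $2n\times 2n$ matrix $M$ there is $S_M\in Sp(2n)$ with $S_M^T M S_M=\begin{bmatrix}\mathcal{D}_M & 0\\ 0&\mathcal{D}_M\end{bmatrix}$, where $\mathcal{D}_M=\operatorname{diag}(\lambda_1^M,\dots,\lambda_n^M)$, $\lambda_1^M\ge\cdots\ge\lambda_n^M>0$; these numbers $\lambda_i^M$ are the symplectic eigenvalues of $M$ (equivalently, $\pm i\lambda_i^M$ are the eigenvalues of $JM$). *)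

theory Defs
  imports "Jordan_Normal_Form.Matrix"
begin

definition mat_trace :: "real mat \<Rightarrow> real" where
  "mat_trace A = (\<Sum>i<dim_row A. A $$ (i, i))"

definition sympJ :: "nat \<Rightarrow> real mat" where
  "sympJ n = four_block_mat (0\<^sub>m n n) (1\<^sub>m n) (- 1\<^sub>m n) (0\<^sub>m n n)"

definition Sp :: "nat \<Rightarrow> real mat set" where
  "Sp n = {S \<in> carrier_mat (2*n) (2*n). S\<^sup>T * sympJ n * S = sympJ n}"

definition sym_pos_def :: "nat \<Rightarrow> real mat \<Rightarrow> bool" where
  "sym_pos_def m M \<longleftrightarrow> M \<in> carrier_mat m m \<and> M\<^sup>T = M \<and>
     (\<forall>v \<in> carrier_vec m. v \<noteq> 0\<^sub>v m \<longrightarrow> v \<bullet> (M *\<^sub>v v) > 0)"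

text \<open>lam (indexed 1..n) lists the symplectic eigenvalues of M in nonincreasing order:
  lam 1 \<ge> ... \<ge> lam n > 0 and some S in Sp(2n) gives S^T M S = diag(D, D),
  D = diag(lam 1, ..., lam n) (Williamson normal form).\<close>
definition symplectic_eigenvalues :: "nat \<Rightarrow> real mat \<Rightarrow> (nat \<Rightarrow> real) \<Rightarrow> bool" where
  "symplectic_eigenvalues n M lam \<longleftrightarrow>
     (\<forall>i j. 1 \<le> i \<longrightarrow> i \<le> j \<longrightarrow> j \<le> n \<longrightarrow> lam j \<le> lam i) \<and>
     (\<forall>i. 1 \<le> i \<longrightarrow> i \<le> n \<longrightarrow> lam i > 0) \<and>
     (\<exists>S \<in> Sp n. S\<^sup>T * M * S =
        four_block_mat (mat_diag n (\<lambda>k. lam (k + 1))) (0\<^sub>m n n)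
                       (0\<^sub>m n n) (mat_diag n (\<lambda>k. lam (k + 1))))"

end

theory Submission
  imports Defs "Jordan_Normal_Form.Determinant"
begin

text \<open>
  By Williamson's theorem \<open>V\<close> and \<open>H\<close> are symplectic congruences of their normal forms
  \<open>D\<^sub>V = diag(d, d)\<close> and \<open>D\<^sub>H = diag(e, e)\<close>. As \<open>Sp(2n)\<close> is a group, two-sided translation
  turns the infimum into that of \<open>tr(T D\<^sub>V T\<^sup>T D\<^sub>H) = \<Sum>\<^sub>i\<^sub>j e\<^sub>i d\<^sub>j q\<^sub>i\<^sub>j(T)\<close> over \<open>T \<in> Sp(2n)\<close>,
  where \<open>q\<^sub>i\<^sub>j(T)\<close> is the squared norm of the \<open>2 \<times> 2\<close> block of \<open>T\<close> coupling the canonical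
  pairs \<open>i\<close> and \<open>j\<close>.

  For symplectic \<open>T\<close> every corner sum satisfies \<open>\<Sum>\<^sub>i\<^sub><\<^sub>K \<Sum>\<^sub>j\<^sub><\<^sub>L q\<^sub>i\<^sub>j(T) \<ge> 2(K + L - n)\<close>:
  there is an orthonormal system of at least \<open>2(K + L - n)\<close> vectors \<open>z\<close> supported on the first
  \<open>L\<close> pairs with \<open>T z\<close> supported on the first \<open>K\<close> pairs; the symplectic identity
  \<open>\<omega>(T z, T J z) = \<omega>(z, J z) = -\<bar>z\<bar>\<^sup>2\<close> forces \<open>\<bar>T z\<bar>\<^sup>2 + \<bar>T J z\<bar>\<^sup>2 \<ge> 2\<close>, and Bessel's inequality
  bounds the sum of these over the system by twice the corner sum. As \<open>q\<^sub>i\<^sub>j \<ge> 0\<close>, the corner sums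
  of \<open>q(T)\<close> thus dominate those of the antidiagonal weights \<open>2[i + j = n - 1]\<close>, so double
  summation by parts against the nonincreasing \<open>e\<close> and \<open>d\<close> gives
  \<open>tr \<ge> 2 \<Sum>\<^sub>i e\<^sub>i d\<^sub>n\<^sub>-\<^sub>1\<^sub>-\<^sub>i\<close>, with equality for the symplectic matrix reversing the order of the
  canonical pairs.
\<close>

section \<open>Orthonormal families of real functions on a finite set\<close>

definition dot_on :: "'a set \<Rightarrow> ('a \<Rightarrow> real) \<Rightarrow> ('a \<Rightarrow> real) \<Rightarrow> real" where
  "dot_on X x y = (\<Sum>a\<in>X. x a * y a)"

definition orthonormal_on :: "'a set \<Rightarrow> (nat \<Rightarrow> 'a \<Rightarrow> real) \<Rightarrow> nat \<Rightarrow> bool" where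
  "orthonormal_on X z r \<longleftrightarrow> (\<forall>i<r. \<forall>j<r. dot_on X (z i) (z j) = (if i = j then 1 else 0))"

lemma dot_on_commute: "dot_on X x y = dot_on X y x"
  unfolding dot_on_def by (simp add: mult.commute)

lemma dot_on_add_scaled_left: "dot_on X (\<lambda>a. x a + k * y a) w = dot_on X x w + k * dot_on X y w"
  unfolding dot_on_def by (simp add: algebra_simps sum.distrib sum_distrib_left)

lemma dot_on_add_scaled_right: "dot_on X w (\<lambda>a. x a + k * y a) = dot_on X w x + k * dot_on X w y"
  using dot_on_add_scaled_left[of X x k y w] by (simp add: dot_on_commute)

lemma dot_on_sum_left: "dot_on X (\<lambda>a. \<Sum>j<r. b j * z j a) w = (\<Sum>j<r. b j * dot_on X (z j) w)"
  unfolding dot_on_def by (simp add: sum_distrib_left sum_distrib_right mult_ac sum.swap[of _ X])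

lemma dot_on_self_nonneg: "0 \<le> dot_on X x x"
  unfolding dot_on_def by (intro sum_nonneg) auto

lemma orthonormal_on_mono: "orthonormal_on X z r \<Longrightarrow> r' \<le> r \<Longrightarrow> orthonormal_on X z r'"
  unfolding orthonormal_on_def by auto

lemma orthonormal_on_coeff:
  assumes "orthonormal_on X z r" "i < r"
  shows "dot_on X (\<lambda>a. \<Sum>j<r. b j * z j a) (z i) = b i"
proof -
  have "dot_on X (\<lambda>a. \<Sum>j<r. b j * z j a) (z i) = (\<Sum>j<r. b j * (if j = i then 1 else 0))"
    unfolding dot_on_sum_left using assms unfolding orthonormal_on_def by (intro sum.cong) auto
  also have "\<dots> = b i"
    using assms(2) by (simp add: if_distrib cong: if_cong)
  finally show ?thesis .
qed

lemma bessel_inequality: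
  assumes "orthonormal_on X z r"
  shows "(\<Sum>i<r. (dot_on X (z i) w)\<^sup>2) \<le> dot_on X w w"
proof -
  define p where "p a = (\<Sum>j<r. dot_on X (z j) w * z j a)" for a
  have pw: "dot_on X p w = (\<Sum>i<r. (dot_on X (z i) w)\<^sup>2)"
    unfolding p_def dot_on_sum_left by (simp add: power2_eq_square)
  have "dot_on X p p = (\<Sum>j<r. dot_on X (z j) w * dot_on X (z j) p)"
    unfolding p_def[abs_def] dot_on_sum_left ..
  also have "\<dots> = (\<Sum>i<r. (dot_on X (z i) w)\<^sup>2)"
    by (intro sum.cong refl)
      (simp add: dot_on_commute[of X "z _"] p_def[abs_def] orthonormal_on_coeff[OF assms] power2_eq_square)
  finally have pp: "dot_on X p p = (\<Sum>i<r. (dot_on X (z i) w)\<^sup>2)" .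
  have "0 \<le> dot_on X (\<lambda>a. w a + (-1) * p a) (\<lambda>a. w a + (-1) * p a)"
    by (rule dot_on_self_nonneg)
  also have "\<dots> = dot_on X w w - 2 * dot_on X p w + dot_on X p p"
    unfolding dot_on_add_scaled_left dot_on_add_scaled_right by (simp add: dot_on_commute[of X w p])
  finally show ?thesis
    using pw pp by simp
qed

lemma orthonormal_on_exists:
  assumes "finite X"
  shows "\<exists>z. orthonormal_on X z (card X)"
proof -
  obtain f where f: "bij_betw f {0..<card X} X"
    using ex_bij_betw_nat_finite[OF assms] by blast
  define z where "z i = (\<lambda>a. if a = f i then 1 else 0 :: real)" for i
  have "orthonormal_on X z (card X)"
    unfolding orthonormal_on_def
  proof (intro allI impI)
    fix i j assume i: "i < card X" and j: "j < card X"
    have "f i \<in> X" using f i by (auto simp: bij_betw_def)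
    have "dot_on X (z i) (z j) = (\<Sum>a\<in>X. if a = f i then (if f i = f j then 1 else 0) else 0)"
      unfolding dot_on_def z_def by (intro sum.cong) auto
    also have "\<dots> = (if f i = f j then 1 else 0)"
      using \<open>f i \<in> X\<close> assms by simp
    also have "\<dots> = (if i = j then 1 else 0)"
      using f i j unfolding bij_betw_def inj_on_def by auto
    finally show "dot_on X (z i) (z j) = (if i = j then 1 else 0)" .
  qed
  then show ?thesis by blast
qed

lemma orthonormal_on_reflect:
  assumes "orthonormal_on X z r" and "dot_on X v v \<noteq> 0"
  shows "orthonormal_on X (\<lambda>i a. z i a + (- 2 * dot_on X v (z i) / dot_on X v v) * v a) r"
  unfolding orthonormal_on_def
proof (intro allI impI)
  fix i j assume "i < r" "j < r"
  let ?c = "\<lambda>i. - 2 * dot_on X v (z i) / dot_on X v v"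
  have "dot_on X (\<lambda>a. z i a + ?c i * v a) (\<lambda>a. z j a + ?c j * v a)
      = dot_on X (z i) (z j) + ?c j * dot_on X (z i) v + ?c i * (dot_on X v (z j) + ?c j * dot_on X v v)"
    unfolding dot_on_add_scaled_left dot_on_add_scaled_right by (simp add: algebra_simps)
  also have "\<dots> = dot_on X (z i) (z j)"
    using assms(2) by (simp add: dot_on_commute[of X "z i" v] field_simps)
  finally show "dot_on X (\<lambda>a. z i a + ?c i * v a) (\<lambda>a. z j a + ?c j * v a) = (if i = j then 1 else 0)"
    using assms(1) \<open>i < r\<close> \<open>j < r\<close> unfolding orthonormal_on_def by auto
qed

text \<open>Householder step: with \<open>p\<close> the projection of \<open>c\<close> onto the span of the family, the
  reflection along \<open>v = p / \<bar>p\<bar> - z l\<close> maps \<open>z l\<close> to \<open>p / \<bar>p\<bar>\<close>, so all other reflected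
  vectors are orthogonal to \<open>c\<close>.\<close>

lemma orthonormal_on_perp_step:
  assumes ON: "orthonormal_on X z (Suc l)"
  shows "\<exists>z'. orthonormal_on X z' l \<and> (\<forall>i<l. dot_on X (z' i) c = 0) \<and>
    (\<forall>x. (\<forall>j<Suc l. dot_on X (z j) x = 0) \<longrightarrow> (\<forall>i<l. dot_on X (z' i) x = 0))"
proof -
  define \<alpha> where "\<alpha> i = dot_on X (z i) c" for i
  define \<nu> where "\<nu> = sqrt (\<Sum>i<Suc l. (\<alpha> i)\<^sup>2)"
  have \<nu>_nonneg: "0 \<le> \<nu>"
    unfolding \<nu>_def by (simp add: sum_nonneg)
  have \<nu>_sq: "\<nu>\<^sup>2 = (\<Sum>i<l. (\<alpha> i)\<^sup>2) + (\<alpha> l)\<^sup>2"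
    unfolding \<nu>_def by (simp add: sum_nonneg)
  then have rest: "(\<Sum>i<l. (\<alpha> i)\<^sup>2) = \<nu>\<^sup>2 - (\<alpha> l)\<^sup>2"
    by simp
  show ?thesis
  proof (cases "\<alpha> l = \<nu>")
    case True
    then have "(\<Sum>i<l. (\<alpha> i)\<^sup>2) = 0"
      using \<nu>_sq by simp
    then have "\<forall>i<l. \<alpha> i = 0"
      by (simp add: sum_nonneg_eq_0_iff)
    then show ?thesis
      using orthonormal_on_mono[OF ON, of l] unfolding \<alpha>_def by auto
  next
    case False
    have \<nu>_pos: "0 < \<nu>"
    proof (rule ccontr)
      assume "\<not> 0 < \<nu>"
      then have "\<nu> = 0" using \<nu>_nonneg by simp
      then have "\<alpha> l = 0"
        using \<nu>_sq by (simp add: add_nonneg_eq_0_iff sum_nonneg)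
      then show False
        using False \<open>\<nu> = 0\<close> by simp
    qed
    define \<gamma> where "\<gamma> j = \<alpha> j / \<nu> - (if j = l then 1 else 0)" for j
    define v where "v a = (\<Sum>j<Suc l. \<gamma> j * z j a)" for a
    have v_dot: "dot_on X v w = (\<Sum>j<Suc l. \<gamma> j * dot_on X (z j) w)" for w
      unfolding v_def[abs_def] dot_on_sum_left ..
    have v_z: "dot_on X v (z i) = \<gamma> i" if "i < Suc l" for i
      unfolding v_def[abs_def] using orthonormal_on_coeff[OF ON that] .
    have v_v: "dot_on X v v = 2 - 2 * \<alpha> l / \<nu>"
    proof -
      have "dot_on X v v = (\<Sum>j<Suc l. \<gamma> j * \<gamma> j)"
        unfolding v_dot[of v] by (intro sum.cong refl) (simp add: dot_on_commute[of X "z _"] v_z)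
      also have "\<dots> = (\<Sum>j<l. (\<alpha> j)\<^sup>2) / \<nu>\<^sup>2 + (\<alpha> l / \<nu> - 1)\<^sup>2"
        unfolding \<gamma>_def by (simp add: sum_divide_distrib power2_eq_square)
      also have "\<dots> = 2 - 2 * \<alpha> l / \<nu>"
        unfolding rest using \<nu>_pos by (simp add: field_simps power2_eq_square)
      finally show ?thesis .
    qed
    have v_v_nonzero: "dot_on X v v \<noteq> 0"
      unfolding v_v using False \<nu>_pos by (auto simp: field_simps)
    have v_c: "dot_on X v c = \<nu> - \<alpha> l"
    proof -
      have "dot_on X v c = (\<Sum>j<Suc l. \<gamma> j * \<alpha> j)"
        unfolding v_dot \<alpha>_def ..
      also have "\<dots> = (\<Sum>j<l. (\<alpha> j)\<^sup>2) / \<nu> + (\<alpha> l / \<nu> - 1) * \<alpha> l"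
        unfolding \<gamma>_def by (simp add: sum_divide_distrib power2_eq_square)
      also have "\<dots> = \<nu> - \<alpha> l"
        unfolding rest using \<nu>_pos by (simp add: field_simps power2_eq_square)
      finally show ?thesis .
    qed
    define z' where "z' i a = z i a + (- 2 * dot_on X v (z i) / dot_on X v v) * v a" for i a
    have "orthonormal_on X z' l"
      unfolding z'_def[abs_def]
      using orthonormal_on_mono[OF orthonormal_on_reflect[OF ON v_v_nonzero]] by simp
    moreover have "dot_on X (z' i) c = 0" if "i < l" for i
    proof -
      have "dot_on X (z' i) c = \<alpha> i + (- 2 * (\<alpha> i / \<nu>) / (2 - 2 * \<alpha> l / \<nu>)) * (\<nu> - \<alpha> l)"
        unfolding z'_def[abs_def] dot_on_add_scaled_left v_c v_v
        using that by (simp add: v_z \<gamma>_def \<alpha>_def)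
      also have "\<dots> = 0"
        using \<nu>_pos False by (simp add: field_simps)
      finally show ?thesis .
    qed
    moreover have "dot_on X (z' i) x = 0" if "\<forall>j<Suc l. dot_on X (z j) x = 0" "i < l" for i x
    proof -
      have "dot_on X v x = 0"
        unfolding v_dot using that(1) by simp
      then show ?thesis
        unfolding z'_def[abs_def] dot_on_add_scaled_left using that by simp
    qed
    ultimately show ?thesis by blast
  qed
qed

lemma orthonormal_on_perp_exists:
  assumes "finite X" and "finite C"
  shows "\<exists>z r. orthonormal_on X z r \<and> card X \<le> r + card C \<and> (\<forall>i<r. \<forall>c\<in>C. dot_on X (z i) c = 0)"
  using assms(2)
proof (induction C rule: finite_induct)
  case empty
  then show ?case
    using orthonormal_on_exists[OF assms(1)] by auto
next
  case (insert c C)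
  then obtain z r where z: "orthonormal_on X z r" "card X \<le> r + card C"
    and perp: "\<forall>i<r. \<forall>c\<in>C. dot_on X (z i) c = 0"
    by blast
  show ?case
  proof (cases r)
    case 0
    then show ?thesis
      using z insert.hyps by (intro exI[of _ z] exI[of _ 0]) auto
  next
    case (Suc l)
    then obtain z' where "orthonormal_on X z' l" "\<forall>i<l. dot_on X (z' i) c = 0"
      "\<forall>x. (\<forall>j<r. dot_on X (z j) x = 0) \<longrightarrow> (\<forall>i<l. dot_on X (z' i) x = 0)"
      using orthonormal_on_perp_step[of X z l c] z(1) by auto
    then show ?thesis
      using z(2) perp insert.hyps Suc by (intro exI[of _ z'] exI[of _ l]) auto
  qed
qed

section \<open>Summation by parts\<close>

lemma summation_by_parts:
  fixes e x :: "nat \<Rightarrow> real" and n :: nat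
  defines "E \<equiv> \<lambda>k. if k < n then e k else 0"
  shows "(\<Sum>i<n. e i * x i) = (\<Sum>k<n. (E k - E (Suc k)) * (\<Sum>i\<le>k. x i))"
proof -
  have telescope: "e i = (\<Sum>k<n. if i \<le> k then E k - E (Suc k) else 0)" if "i < n" for i
  proof -
    have "(\<Sum>k<n. if i \<le> k then E k - E (Suc k) else 0) = (\<Sum>k\<in>{i..<n}. E k - E (Suc k))"
      by (rule sum.mono_neutral_cong_right) auto
    also have "\<dots> = - (\<Sum>k\<in>{i..<n}. E (Suc k) - E k)"
      by (simp add: sum_negf[symmetric])
    also have "\<dots> = E i - E n"
      using that by (subst sum_Suc_diff') auto
    finally show ?thesis
      using that unfolding E_def by simp
  qed
  have "(\<Sum>i<n. e i * x i) = (\<Sum>i<n. \<Sum>k<n. (if i \<le> k then E k - E (Suc k) else 0) * x i)"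
    by (intro sum.cong refl) (simp add: telescope sum_distrib_right)
  also have "\<dots> = (\<Sum>k<n. \<Sum>i<n. (if i \<le> k then E k - E (Suc k) else 0) * x i)"
    by (rule sum.swap)
  also have "\<dots> = (\<Sum>k<n. (E k - E (Suc k)) * (\<Sum>i\<le>k. x i))"
  proof (intro sum.cong refl)
    fix k assume "k \<in> {..<n}"
    then have "(\<Sum>i<n. (if i \<le> k then E k - E (Suc k) else 0) * x i)
        = (\<Sum>i\<le>k. (E k - E (Suc k)) * x i)"
      by (intro sum.mono_neutral_cong_right) auto
    then show "(\<Sum>i<n. (if i \<le> k then E k - E (Suc k) else 0) * x i)
        = (E k - E (Suc k)) * (\<Sum>i\<le>k. x i)"
      by (simp add: sum_distrib_left)
  qed
  finally show ?thesis .
qed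

lemma double_summation_by_parts:
  fixes e d :: "nat \<Rightarrow> real" and m :: "nat \<Rightarrow> nat \<Rightarrow> real" and n :: nat
  defines "E \<equiv> \<lambda>k. if k < n then e k else 0" and "D \<equiv> \<lambda>l. if l < n then d l else 0"
  shows "(\<Sum>i<n. \<Sum>j<n. e i * d j * m i j)
    = (\<Sum>k<n. \<Sum>l<n. (E k - E (Suc k)) * (D l - D (Suc l)) * (\<Sum>j\<le>l. \<Sum>i\<le>k. m i j))"
proof -
  have "(\<Sum>i<n. \<Sum>j<n. e i * d j * m i j) = (\<Sum>i<n. e i * (\<Sum>j<n. d j * m i j))"
    by (simp add: sum_distrib_left mult_ac)
  also have "\<dots> = (\<Sum>k<n. (E k - E (Suc k)) * (\<Sum>i\<le>k. \<Sum>j<n. d j * m i j))"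
    unfolding E_def by (rule summation_by_parts)
  also have "\<dots> = (\<Sum>k<n. (E k - E (Suc k)) * (\<Sum>j<n. d j * (\<Sum>i\<le>k. m i j)))"
    unfolding sum_distrib_left by (subst sum.swap) (rule refl)
  also have "\<dots> = (\<Sum>k<n. (E k - E (Suc k)) * (\<Sum>l<n. (D l - D (Suc l)) * (\<Sum>j\<le>l. \<Sum>i\<le>k. m i j)))"
    unfolding D_def by (subst summation_by_parts) (rule refl)
  also have "\<dots> = (\<Sum>k<n. \<Sum>l<n. (E k - E (Suc k)) * (D l - D (Suc l)) * (\<Sum>j\<le>l. \<Sum>i\<le>k. m i j))"
    by (simp add: sum_distrib_left mult_ac)
  finally show ?thesis .
qed

lemma weighted_double_sum_mono:
  fixes e d :: "nat \<Rightarrow> real" and p q :: "nat \<Rightarrow> nat \<Rightarrow> real"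
  assumes e_mono: "\<And>i j. i \<le> j \<Longrightarrow> j < n \<Longrightarrow> e j \<le> e i" and e_nonneg: "\<And>i. i < n \<Longrightarrow> 0 \<le> e i"
    and d_mono: "\<And>i j. i \<le> j \<Longrightarrow> j < n \<Longrightarrow> d j \<le> d i" and d_nonneg: "\<And>i. i < n \<Longrightarrow> 0 \<le> d i"
    and corner: "\<And>K L. K \<le> n \<Longrightarrow> L \<le> n \<Longrightarrow> (\<Sum>i<K. \<Sum>j<L. p i j) \<le> (\<Sum>i<K. \<Sum>j<L. q i j)"
  shows "(\<Sum>i<n. \<Sum>j<n. e i * d j * p i j) \<le> (\<Sum>i<n. \<Sum>j<n. e i * d j * q i j)"
proof -
  define E where "E = (\<lambda>k. if k < n then e k else 0)"
  define D where "D = (\<lambda>l. if l < n then d l else 0)"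
  have "(\<Sum>i<n. \<Sum>j<n. e i * d j * p i j)
      = (\<Sum>k<n. \<Sum>l<n. (E k - E (Suc k)) * (D l - D (Suc l)) * (\<Sum>j\<le>l. \<Sum>i\<le>k. p i j))"
    unfolding E_def D_def by (rule double_summation_by_parts)
  also have "\<dots> \<le> (\<Sum>k<n. \<Sum>l<n. (E k - E (Suc k)) * (D l - D (Suc l)) * (\<Sum>j\<le>l. \<Sum>i\<le>k. q i j))"
  proof (intro sum_mono)
    fix k l assume k: "k \<in> {..<n}" and l: "l \<in> {..<n}"
    have "0 \<le> E k - E (Suc k)" "0 \<le> D l - D (Suc l)"
      using k l e_mono[of k "Suc k"] e_nonneg[of k] d_mono[of l "Suc l"] d_nonneg[of l]
      unfolding E_def D_def by auto
    moreover have "(\<Sum>j\<le>l. \<Sum>i\<le>k. p i j) \<le> (\<Sum>j\<le>l. \<Sum>i\<le>k. q i j)"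
      using corner[of "Suc k" "Suc l"] k l
      unfolding lessThan_Suc_atMost sum.swap[of _ "{..k}"] by simp
    ultimately show "(E k - E (Suc k)) * (D l - D (Suc l)) * (\<Sum>j\<le>l. \<Sum>i\<le>k. p i j)
        \<le> (E k - E (Suc k)) * (D l - D (Suc l)) * (\<Sum>j\<le>l. \<Sum>i\<le>k. q i j)"
      by (intro mult_left_mono) simp_all
  qed
  also have "\<dots> = (\<Sum>i<n. \<Sum>j<n. e i * d j * q i j)"
    unfolding E_def D_def by (rule double_summation_by_parts[symmetric])
  finally show ?thesis .
qed

lemma antidiagonal_corner_sum:
  assumes "K \<le> n" "L \<le> n"
  shows "(\<Sum>i<K. \<Sum>j<L. if i + j = n - 1 then 2 else 0 :: real) = 2 * real (K + L - n)"
proof -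
  have "(\<Sum>i<K. \<Sum>j<L. if i + j = n - 1 then 2 else 0 :: real) = (\<Sum>i<K. if n - L \<le> i then 2 else 0)"
  proof (intro sum.cong refl)
    fix i assume "i \<in> {..<K}"
    then have "(\<Sum>j<L. if i + j = n - 1 then 2 else 0 :: real)
        = (\<Sum>j<L. if j = n - 1 - i then 2 else 0)"
      using assms by (intro sum.cong) auto
    also have "\<dots> = (if n - L \<le> i then 2 else 0)"
      using \<open>i \<in> {..<K}\<close> assms by auto
    finally show "(\<Sum>j<L. if i + j = n - 1 then 2 else 0 :: real) = (if n - L \<le> i then 2 else 0)" .
  qed
  also have "\<dots> = (\<Sum>i\<in>{n - L..<K}. 2)"
    by (rule sum.mono_neutral_cong_right) auto
  also have "\<dots> = 2 * real (K + L - n)"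
    using assms by simp
  finally show ?thesis .
qed

lemma antidiagonal_weighted_sum:
  fixes e d :: "nat \<Rightarrow> real" and n :: nat
  shows "(\<Sum>i<n. \<Sum>j<n. e i * d j * (if i + j = n - 1 then 2 else 0))
    = 2 * (\<Sum>i<n. e i * d (n - 1 - i) :: real)"
proof -
  have "(\<Sum>j<n. e i * d j * (if i + j = n - 1 then 2 else 0)) = 2 * (e i * d (n - 1 - i))"
    if "i < n" for i
  proof -
    have "(\<Sum>j<n. e i * d j * (if i + j = n - 1 then 2 else 0))
        = (\<Sum>j<n. if j = n - 1 - i then 2 * (e i * d j) else 0)"
      using that by (intro sum.cong refl) auto
    also have "\<dots> = 2 * (e i * d (n - 1 - i))"
      using that by simp
    finally show ?thesis .
  qed
  then show ?thesis
    by (simp add: sum_distrib_left)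
qed

section \<open>The symplectic group\<close>

lemma square_mult_carrier:
  "(A :: 'a :: semiring_0 mat) \<in> carrier_mat N N \<Longrightarrow> B \<in> carrier_mat N N \<Longrightarrow> A * B \<in> carrier_mat N N"
  by auto

lemma square_transpose_carrier: "A \<in> carrier_mat N N \<Longrightarrow> A\<^sup>T \<in> carrier_mat N N"
  by auto

lemma square_mult_assoc:
  "(A :: 'a :: semiring_0 mat) \<in> carrier_mat N N \<Longrightarrow> B \<in> carrier_mat N N \<Longrightarrow> C \<in> carrier_mat N N
   \<Longrightarrow> A * B * C = A * (B * C)"
  by (rule assoc_mult_mat) auto

lemmas square_mat_simps = square_mult_carrier square_transpose_carrier square_mult_assoc

lemma sympJ_carrier [simp]: "sympJ n \<in> carrier_mat (2*n) (2*n)"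
  unfolding sympJ_def mult_2 by auto

lemma sympJ_dim [simp]: "dim_row (sympJ n) = 2*n" "dim_col (sympJ n) = 2*n"
  using sympJ_carrier[of n] unfolding carrier_mat_def by auto

lemma sympJ_index:
  assumes "a < 2*n" "b < 2*n"
  shows "sympJ n $$ (a, b) = (if a < n then of_bool (b = a + n) else - of_bool (a = b + n))"
  using assms unfolding sympJ_def by auto

lemma transpose_sympJ: "(sympJ n)\<^sup>T = - sympJ n"
  by (rule eq_matI) (auto simp: sympJ_index)

lemma sympJ_mult_sympJ: "sympJ n * sympJ n = - 1\<^sub>m (2*n)"
  unfolding sympJ_def mult_2
  by (subst mult_four_block_mat[of _ n n _ n _ n], auto, (rule eq_matI; auto))

lemma transpose_sympJ_mult_sympJ: "(sympJ n)\<^sup>T * sympJ n = 1\<^sub>m (2*n)"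
  by (simp add: transpose_sympJ sympJ_mult_sympJ)

lemma Sp_carrier: "S \<in> Sp n \<Longrightarrow> S \<in> carrier_mat (2*n) (2*n)"
  unfolding Sp_def by auto

lemma SpD: "S \<in> Sp n \<Longrightarrow> S\<^sup>T * sympJ n * S = sympJ n"
  unfolding Sp_def by auto

lemma sympJ_in_Sp: "sympJ n \<in> Sp n"
  unfolding Sp_def by (simp add: transpose_sympJ_mult_sympJ)

lemma Sp_mult:
  assumes "A \<in> Sp n" "B \<in> Sp n"
  shows "A * B \<in> Sp n"
proof -
  have A: "A \<in> carrier_mat (2*n) (2*n)" and B: "B \<in> carrier_mat (2*n) (2*n)"
    using assms by (auto simp: Sp_carrier)
  have "(A * B)\<^sup>T * sympJ n * (A * B) = B\<^sup>T * (A\<^sup>T * sympJ n * A) * B"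
    using A B by (simp add: transpose_mult[OF A B] square_mat_simps[where N="2*n"])
  also have "\<dots> = sympJ n"
    using SpD[OF assms(1)] SpD[OF assms(2)] by simp
  finally show ?thesis
    using A B unfolding Sp_def by auto
qed

definition sp_inverse :: "nat \<Rightarrow> real mat \<Rightarrow> real mat" where
  "sp_inverse n S = (sympJ n)\<^sup>T * S\<^sup>T * sympJ n"

lemma sp_inverse_carrier [simp]:
  "S \<in> carrier_mat (2*n) (2*n) \<Longrightarrow> sp_inverse n S \<in> carrier_mat (2*n) (2*n)"
  unfolding sp_inverse_def by auto

lemma sp_inverse_mult:
  assumes "S \<in> Sp n"
  shows "sp_inverse n S * S = 1\<^sub>m (2*n)"
proof -
  have S: "S \<in> carrier_mat (2*n) (2*n)" using assms by (rule Sp_carrier)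
  have "sp_inverse n S * S = (sympJ n)\<^sup>T * (S\<^sup>T * sympJ n * S)"
    unfolding sp_inverse_def using S by (simp add: square_mat_simps[where N="2*n"])
  then show ?thesis
    using SpD[OF assms] by (simp add: transpose_sympJ_mult_sympJ)
qed

lemma mult_sp_inverse:
  assumes "S \<in> Sp n"
  shows "S * sp_inverse n S = 1\<^sub>m (2*n)"
  using mat_mult_left_right_inverse[OF _ Sp_carrier[OF assms] sp_inverse_mult[OF assms]]
    Sp_carrier[OF assms] by simp

lemma Sp_transpose:
  assumes "S \<in> Sp n"
  shows "S\<^sup>T \<in> Sp n"
proof -
  let ?J = "sympJ n" and ?M = "S * sympJ n * S\<^sup>T"
  have S: "S \<in> carrier_mat (2*n) (2*n)" using assms by (rule Sp_carrier)
  have M: "?M \<in> carrier_mat (2*n) (2*n)" using S by (simp add: square_mat_simps)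
  have "- (?M * ?J) = 1\<^sub>m (2*n)"
    using mult_sp_inverse[OF assms] S
    unfolding sp_inverse_def transpose_sympJ by (simp add: square_mat_simps[where N="2*n"])
  then have "?M * ?J = - 1\<^sub>m (2*n)"
    by (metis uminus_uminus_mat)
  then have "?M * ?J * ?J = - ?J"
    by simp
  moreover have "?M * ?J * ?J = - ?M"
    using M
    by (simp add: square_mult_assoc[OF M] sympJ_mult_sympJ, subst uminus_mult_right_mat, auto)
  ultimately have "?M = ?J"
    by (metis uminus_uminus_mat)
  then show ?thesis
    using S unfolding Sp_def by simp
qed

lemma sp_inverse_in_Sp: "S \<in> Sp n \<Longrightarrow> sp_inverse n S \<in> Sp n"
  unfolding sp_inverse_def by (intro Sp_mult Sp_transpose sympJ_in_Sp)

lemma Sp_translate_image: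
  assumes A: "A \<in> Sp n" and B: "B \<in> Sp n"
  shows "(\<lambda>S. A * S * B) ` Sp n = Sp n"
proof
  show "(\<lambda>S. A * S * B) ` Sp n \<subseteq> Sp n"
    using assms by (auto intro: Sp_mult)
  show "Sp n \<subseteq> (\<lambda>S. A * S * B) ` Sp n"
  proof
    fix T assume T: "T \<in> Sp n"
    let ?S = "sp_inverse n A * T * sp_inverse n B"
    have carrier: "A \<in> carrier_mat (2*n) (2*n)" "B \<in> carrier_mat (2*n) (2*n)"
      "T \<in> carrier_mat (2*n) (2*n)"
      using A B T by (auto simp: Sp_carrier)
    have "A * ?S * B = (A * sp_inverse n A) * T * (sp_inverse n B * B)"
      using carrier by (simp add: square_mat_simps[where N="2*n"])
    also have "\<dots> = T"
      using carrier by (simp add: mult_sp_inverse[OF A] sp_inverse_mult[OF B])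
    finally have "T = A * ?S * B" ..
    moreover have "?S \<in> Sp n"
      using A B T by (intro Sp_mult sp_inverse_in_Sp)
    ultimately show "T \<in> (\<lambda>S. A * S * B) ` Sp n" by blast
  qed
qed

lemma block_diag_orthogonal_in_Sp:
  assumes A: "A \<in> carrier_mat n n" and orth: "A\<^sup>T * A = 1\<^sub>m n"
  shows "four_block_mat A (0\<^sub>m n n) (0\<^sub>m n n) A \<in> Sp n"
proof -
  have transpose: "(four_block_mat A (0\<^sub>m n n) (0\<^sub>m n n) A)\<^sup>T = four_block_mat A\<^sup>T (0\<^sub>m n n) (0\<^sub>m n n) A\<^sup>T"
    using A by (subst transpose_four_block_mat[of _ n n _ n _ n]) auto
  have "(four_block_mat A (0\<^sub>m n n) (0\<^sub>m n n) A)\<^sup>T * sympJ n * four_block_mat A (0\<^sub>m n n) (0\<^sub>m n n) A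
      = four_block_mat (0\<^sub>m n n) (A\<^sup>T * A) (- (A\<^sup>T * A)) (0\<^sub>m n n)"
    unfolding transpose sympJ_def using A
    by (subst mult_four_block_mat[of _ n n _ n _ n], auto,
        subst mult_four_block_mat[of _ n n _ n _ n], auto)
  also have "\<dots> = sympJ n"
    unfolding orth sympJ_def ..
  finally show ?thesis
    using A unfolding Sp_def mult_2 by auto
qed

section \<open>Corner blocks of symplectic matrices\<close>

definition pair_indices :: "nat \<Rightarrow> nat \<Rightarrow> nat set" where
  "pair_indices n K = {..<K} \<union> {n..<n+K}"

lemma pair_indices_all: "pair_indices n n = {..<2*n}"
  unfolding pair_indices_def by auto

lemma pair_indices_subset: "K \<le> n \<Longrightarrow> pair_indices n K \<subseteq> {..<2*n}"
  unfolding pair_indices_def by auto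

lemma finite_pair_indices [simp]: "finite (pair_indices n K)"
  unfolding pair_indices_def by auto

lemma card_pair_indices: "K \<le> n \<Longrightarrow> card (pair_indices n K) = 2*K"
  unfolding pair_indices_def by (subst card_Un_disjoint) auto

lemma sum_pair_indices:
  assumes "K \<le> n"
  shows "sum f (pair_indices n K) = (\<Sum>i<K. f i + f (i + n))"
proof -
  have "sum f (pair_indices n K) = sum f {..<K} + sum f {n..<n+K}"
    unfolding pair_indices_def using assms by (intro sum.union_disjoint) auto
  also have "sum f {n..<n+K} = (\<Sum>i<K. f (i + n))"
    using sum.shift_bounds_nat_ivl[of f 0 n K] by (simp add: add.commute lessThan_atLeast0)
  finally show ?thesis
    by (simp add: sum.distrib)
qed

definition sympJ_vec :: "nat \<Rightarrow> (nat \<Rightarrow> real) \<Rightarrow> nat \<Rightarrow> real" where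
  "sympJ_vec n x b = (if b < n then x (b + n) else - x (b - n))"

lemma sum_sympJ_row:
  assumes "c < 2*n"
  shows "(\<Sum>b<2*n. sympJ n $$ (c, b) * x b) = sympJ_vec n x c"
proof -
  have "(\<Sum>b<2*n. sympJ n $$ (c, b) * x b)
      = (\<Sum>b<2*n. if c < n then (if b = c + n then x b else 0)
                     else (if b = c - n then - x b else 0))"
    using assms by (intro sum.cong) (auto simp: sympJ_index)
  also have "\<dots> = sympJ_vec n x c"
    using assms unfolding sympJ_vec_def by (auto simp: sum.If_cases)
  finally show ?thesis .
qed

lemma sympJ_vec_sum:
  "sympJ_vec n (\<lambda>b. \<Sum>a\<in>A. w a * x a b) c = (\<Sum>a\<in>A. w a * sympJ_vec n (x a) c)"
  unfolding sympJ_vec_def by (auto simp: sum_negf)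

lemma dot_on_sympJ_vec:
  assumes "K \<le> n"
  shows "dot_on (pair_indices n K) (sympJ_vec n x) (sympJ_vec n y) = dot_on (pair_indices n K) x y"
  unfolding dot_on_def sum_pair_indices[OF assms] sympJ_vec_def using assms
  by (intro sum.cong) auto

lemma sum_sympJ_vec_pair_indices:
  assumes "K \<le> n" "a \<in> pair_indices n K"
  shows "(\<Sum>a'\<in>pair_indices n K. sympJ n $$ (a, a') * sympJ_vec n z a') = - z a"
proof -
  have lt: "b < 2*n" if "b \<in> pair_indices n K" for b
    using that pair_indices_subset[OF assms(1)] by blast
  have "(\<Sum>a'\<in>pair_indices n K. sympJ n $$ (a, a') * sympJ_vec n z a')
      = (\<Sum>a'\<in>pair_indices n K. if a < n then (if a' = a + n then sympJ_vec n z a' else 0)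
                                  else (if a' = a - n then - sympJ_vec n z a' else 0))"
    using assms(2) lt by (intro sum.cong) (auto simp: sympJ_index)
  also have "\<dots> = - z a"
    using assms unfolding pair_indices_def sympJ_vec_def by (auto simp: sum.If_cases)
  finally show ?thesis .
qed

lemma Sp_columns_sympJ:
  assumes T: "T \<in> Sp n" and "a < 2*n" "a' < 2*n"
  shows "(\<Sum>b<2*n. T $$ (b, a) * sympJ_vec n (\<lambda>b'. T $$ (b', a')) b) = sympJ n $$ (a, a')"
proof -
  have TC: "T \<in> carrier_mat (2*n) (2*n)" using T by (rule Sp_carrier)
  have "sympJ n $$ (a, a') = (T\<^sup>T * sympJ n * T) $$ (a, a')"
    using SpD[OF T] by simp
  also have "\<dots> = (\<Sum>b<2*n. (\<Sum>c<2*n. T $$ (c, a) * sympJ n $$ (c, b)) * T $$ (b, a'))"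
    using TC assms by (simp add: scalar_prod_def lessThan_atLeast0)
  also have "\<dots> = (\<Sum>c<2*n. T $$ (c, a) * (\<Sum>b<2*n. sympJ n $$ (c, b) * T $$ (b, a')))"
    unfolding sum_distrib_left sum_distrib_right mult.assoc by (rule sum.swap)
  also have "\<dots> = (\<Sum>c<2*n. T $$ (c, a) * sympJ_vec n (\<lambda>b'. T $$ (b', a')) c)"
    by (intro sum.cong refl) (simp add: sum_sympJ_row)
  finally show ?thesis by simp
qed

lemma Sp_pairing_bound:
  assumes T: "T \<in> Sp n" and K: "K \<le> n" and L: "L \<le> n"
    and unit: "dot_on (pair_indices n L) z z = 1"
    and supp: "\<And>b. b < 2*n \<Longrightarrow> b \<notin> pair_indices n K \<Longrightarrow>
      dot_on (pair_indices n L) z (\<lambda>a. T $$ (b, a)) = 0"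
  shows "2 \<le> (\<Sum>b\<in>pair_indices n K. (dot_on (pair_indices n L) z (\<lambda>a. T $$ (b, a)))\<^sup>2
                + (dot_on (pair_indices n L) (sympJ_vec n z) (\<lambda>a. T $$ (b, a)))\<^sup>2)"
proof -
  let ?X = "pair_indices n L" and ?Y = "pair_indices n K"
  define w where "w = sympJ_vec n z"
  define u where "u b = dot_on ?X z (\<lambda>a. T $$ (b, a))" for b
  define v where "v b = dot_on ?X w (\<lambda>a. T $$ (b, a))" for b
  have X_lt: "a < 2*n" if "a \<in> ?X" for a
    using that pair_indices_subset[OF L] by blast
  \<comment> \<open>\<open>\<omega>(T z, T J z) = \<omega>(z, J z) = - \<bar>z\<bar>\<^sup>2\<close>, and \<open>T z\<close> vanishes off the first \<open>K\<close> pairs\<close>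
  have "-1 = (\<Sum>a\<in>?X. z a * (\<Sum>a'\<in>?X. sympJ n $$ (a, a') * w a'))"
    using unit sum_sympJ_vec_pair_indices[OF L] unfolding dot_on_def w_def
    by (simp add: sum_negf)
  also have "\<dots> = (\<Sum>a\<in>?X. \<Sum>a'\<in>?X. z a * w a' *
      (\<Sum>b<2*n. T $$ (b, a) * sympJ_vec n (\<lambda>b'. T $$ (b', a')) b))"
    using Sp_columns_sympJ[OF T] X_lt by (auto simp: sum_distrib_left mult_ac intro!: sum.cong)
  also have "\<dots> = (\<Sum>b<2*n. \<Sum>a\<in>?X. \<Sum>a'\<in>?X.
      (z a * T $$ (b, a)) * (w a' * sympJ_vec n (\<lambda>b'. T $$ (b', a')) b))"
    by (subst sum.swap, rule sum.cong[OF refl], subst sum.swap) (simp add: sum_distrib_left mult_ac)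
  also have "\<dots> = (\<Sum>b<2*n. u b * sympJ_vec n v b)"
    unfolding u_def v_def dot_on_def sympJ_vec_sum sum_product by (simp add: mult_ac)
  also have "\<dots> = (\<Sum>b\<in>?Y. u b * sympJ_vec n v b)"
    using supp pair_indices_subset[OF K] unfolding u_def by (intro sum.mono_neutral_right) auto
  finally have pairing: "-1 = (\<Sum>b\<in>?Y. u b * sympJ_vec n v b)" .
  have "2 = - 2 * (\<Sum>b\<in>?Y. u b * sympJ_vec n v b)"
    unfolding pairing[symmetric] by simp
  also have "\<dots> \<le> (\<Sum>b\<in>?Y. (u b)\<^sup>2 + (sympJ_vec n v b)\<^sup>2)"
    unfolding sum_distrib_left
  proof (rule sum_mono)
    fix b
    show "- 2 * (u b * sympJ_vec n v b) \<le> (u b)\<^sup>2 + (sympJ_vec n v b)\<^sup>2"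
      using zero_le_power2[of "u b + sympJ_vec n v b"] unfolding power2_sum by linarith
  qed
  also have "\<dots> = (\<Sum>b\<in>?Y. (u b)\<^sup>2 + (v b)\<^sup>2)"
    using dot_on_sympJ_vec[OF K, of v v] unfolding dot_on_def sum.distrib
    by (simp add: power2_eq_square)
  finally show ?thesis
    unfolding u_def v_def w_def .
qed

lemma Sp_corner_sq_sum_ge:
  assumes T: "T \<in> Sp n" and K: "K \<le> n" and L: "L \<le> n"
  shows "2 * real K + 2 * real L - 2 * real n
    \<le> (\<Sum>b\<in>pair_indices n K. \<Sum>a\<in>pair_indices n L. (T $$ (b, a))\<^sup>2)"
proof -
  let ?X = "pair_indices n L" and ?Y = "pair_indices n K"
  let ?row = "\<lambda>b a. T $$ (b, a)"
  define C where "C = ?row ` ({..<2*n} - ?Y)"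
  have "card C \<le> card ({..<2*n} - ?Y)"
    unfolding C_def by (rule card_image_le) simp
  also have "\<dots> = 2*n - 2*K"
    using pair_indices_subset[OF K] card_pair_indices[OF K] by (simp add: card_Diff_subset)
  finally have card_C: "card C \<le> 2*n - 2*K" .
  obtain z r where z: "orthonormal_on ?X z r" and r: "card ?X \<le> r + card C"
    and perp: "\<forall>i<r. \<forall>c\<in>C. dot_on ?X (z i) c = 0"
    using orthonormal_on_perp_exists[of ?X C] unfolding C_def by auto
  have "2*L \<le> r + (2*n - 2*K)"
    using r card_C card_pair_indices[OF L] by simp
  then have r_ge: "2 * real K + 2 * real L - 2 * real n \<le> real r"
    using K by linarith
  have Jz: "orthonormal_on ?X (\<lambda>i. sympJ_vec n (z i)) r"
    using z unfolding orthonormal_on_def dot_on_sympJ_vec[OF L] .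
  have "2 * real r = (\<Sum>i<r. 2)"
    by simp
  also have "\<dots> \<le> (\<Sum>i<r. \<Sum>b\<in>?Y.
      (dot_on ?X (z i) (?row b))\<^sup>2 + (dot_on ?X (sympJ_vec n (z i)) (?row b))\<^sup>2)"
  proof (rule sum_mono)
    fix i assume "i \<in> {..<r}"
    then show "2 \<le> (\<Sum>b\<in>?Y. (dot_on ?X (z i) (?row b))\<^sup>2 + (dot_on ?X (sympJ_vec n (z i)) (?row b))\<^sup>2)"
      using z perp unfolding orthonormal_on_def C_def
      by (intro Sp_pairing_bound[OF T K L]) auto
  qed
  also have "\<dots> = (\<Sum>b\<in>?Y. (\<Sum>i<r. (dot_on ?X (z i) (?row b))\<^sup>2)
      + (\<Sum>i<r. (dot_on ?X (sympJ_vec n (z i)) (?row b))\<^sup>2))"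
    by (subst sum.swap) (simp add: sum.distrib)
  also have "\<dots> \<le> (\<Sum>b\<in>?Y. 2 * dot_on ?X (?row b) (?row b))"
  proof (rule sum_mono)
    fix b
    show "(\<Sum>i<r. (dot_on ?X (z i) (?row b))\<^sup>2) + (\<Sum>i<r. (dot_on ?X (sympJ_vec n (z i)) (?row b))\<^sup>2)
        \<le> 2 * dot_on ?X (?row b) (?row b)"
      using add_mono[OF bessel_inequality[OF z, of "?row b"] bessel_inequality[OF Jz, of "?row b"]]
      by simp
  qed
  also have "\<dots> = 2 * (\<Sum>b\<in>?Y. \<Sum>a\<in>?X. (T $$ (b, a))\<^sup>2)"
    by (simp add: dot_on_def sum_distrib_left power2_eq_square)
  finally show ?thesis
    using r_ge by linarith
qed

section \<open>Traces against Williamson normal forms\<close>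

lemma mat_trace_mult_comm:
  assumes "A \<in> carrier_mat N N" "B \<in> carrier_mat N N"
  shows "mat_trace (A * B) = mat_trace (B * A)"
proof -
  have "mat_trace (A * B) = (\<Sum>i<N. \<Sum>k<N. A $$ (i, k) * B $$ (k, i))"
    using assms unfolding mat_trace_def
    by (auto simp: scalar_prod_def lessThan_atLeast0 intro!: sum.cong)
  also have "\<dots> = (\<Sum>k<N. \<Sum>i<N. B $$ (k, i) * A $$ (i, k))"
    by (subst sum.swap) (simp add: mult.commute)
  also have "\<dots> = mat_trace (B * A)"
    using assms unfolding mat_trace_def
    by (auto simp: scalar_prod_def lessThan_atLeast0 intro!: sum.cong)
  finally show ?thesis .
qed

lemma mat_trace_congruence:
  assumes "S \<in> carrier_mat N N" "P \<in> carrier_mat N N" "Q \<in> carrier_mat N N"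
    and "D \<in> carrier_mat N N" "E \<in> carrier_mat N N"
  shows "mat_trace (S * (P\<^sup>T * D * P) * S\<^sup>T * (Q\<^sup>T * E * Q))
    = mat_trace ((Q * S * P\<^sup>T) * D * (Q * S * P\<^sup>T)\<^sup>T * E)"
proof -
  let ?M = "S * P\<^sup>T * D * P * S\<^sup>T * Q\<^sup>T * E"
  have "(Q * S * P\<^sup>T)\<^sup>T = P * (Q * S)\<^sup>T"
    using assms by (subst transpose_mult[of _ N N]) auto
  also have "(Q * S)\<^sup>T = S\<^sup>T * Q\<^sup>T"
    using assms by (subst transpose_mult[of _ N N]) auto
  finally have transpose: "(Q * S * P\<^sup>T)\<^sup>T = P * (S\<^sup>T * Q\<^sup>T)" .
  have "mat_trace (S * (P\<^sup>T * D * P) * S\<^sup>T * (Q\<^sup>T * E * Q)) = mat_trace (?M * Q)"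
    using assms by (simp add: square_mat_simps[where N=N])
  also have "\<dots> = mat_trace (Q * ?M)"
    using assms by (intro mat_trace_mult_comm[of _ N]) (simp_all add: square_mat_simps)
  also have "Q * ?M = (Q * S * P\<^sup>T) * D * (Q * S * P\<^sup>T)\<^sup>T * E"
    using assms unfolding transpose by (simp add: square_mat_simps[where N=N])
  finally show ?thesis .
qed

lemma congruence_eq_inverse:
  fixes S M I :: "'a :: comm_ring_1 mat"
  assumes "S\<^sup>T * M * S = D" "S * I = 1\<^sub>m N"
    and "S \<in> carrier_mat N N" "I \<in> carrier_mat N N" "M \<in> carrier_mat N N"
  shows "M = I\<^sup>T * D * I"
proof -
  have transpose: "(S * I)\<^sup>T = I\<^sup>T * S\<^sup>T"
    using assms(3,4) by (rule transpose_mult)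
  have "I\<^sup>T * D * I = (S * I)\<^sup>T * M * (S * I)"
    unfolding assms(1)[symmetric] transpose
    using assms(3-5) by (simp add: square_mat_simps[where N=N])
  also have "\<dots> = M"
    using assms(2,5) by simp
  finally show ?thesis ..
qed

definition williamson_form :: "nat \<Rightarrow> (nat \<Rightarrow> real) \<Rightarrow> real mat" where
  "williamson_form n d = four_block_mat (mat_diag n d) (0\<^sub>m n n) (0\<^sub>m n n) (mat_diag n d)"

lemma williamson_form_eq_mat_diag: "williamson_form n d = mat_diag (2*n) (\<lambda>a. d (a mod n))"
  unfolding williamson_form_def by (rule eq_matI) (auto simp: mat_diag_def le_mod_geq)

lemma williamson_form_carrier [simp]: "williamson_form n d \<in> carrier_mat (2*n) (2*n)"
  unfolding williamson_form_eq_mat_diag by simp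

definition pair_block_sq :: "nat \<Rightarrow> real mat \<Rightarrow> nat \<Rightarrow> nat \<Rightarrow> real" where
  "pair_block_sq n T i j =
     (T $$ (i, j))\<^sup>2 + (T $$ (i, j + n))\<^sup>2 + (T $$ (i + n, j))\<^sup>2 + (T $$ (i + n, j + n))\<^sup>2"

lemma mat_trace_williamson_congruence:
  assumes T: "T \<in> carrier_mat (2*n) (2*n)"
  shows "mat_trace (T * williamson_form n d * T\<^sup>T * williamson_form n e)
    = (\<Sum>i<n. \<Sum>j<n. e i * d j * pair_block_sq n T i j)"
proof -
  let ?d = "\<lambda>a. d (a mod n)" and ?e = "\<lambda>a. e (a mod n)"
  have C: "T * williamson_form n d * T\<^sup>T \<in> carrier_mat (2*n) (2*n)"
    using T by (simp add: square_mat_simps)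
  have diag: "(T * williamson_form n d * T\<^sup>T) $$ (a, a) = (\<Sum>b<2*n. ?d b * (T $$ (a, b))\<^sup>2)"
    if "a < 2*n" for a
    using that T unfolding williamson_form_eq_mat_diag mat_diag_mult_right[OF T]
    by (simp add: scalar_prod_def lessThan_atLeast0 power2_eq_square mult_ac)
  have "mat_trace (T * williamson_form n d * T\<^sup>T * williamson_form n e)
      = (\<Sum>a<2*n. ?e a * (\<Sum>b<2*n. ?d b * (T $$ (a, b))\<^sup>2))"
    unfolding mat_trace_def williamson_form_eq_mat_diag[of n e] mat_diag_mult_right[OF C]
    using C by (simp add: diag mult.commute)
  also have "\<dots> = (\<Sum>i<n. \<Sum>j<n. e i * d j * pair_block_sq n T i j)"
    unfolding pair_indices_all[symmetric] sum_pair_indices[OF order_refl] sum_distrib_left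
      sum.distrib[symmetric] pair_block_sq_def
    by (intro sum.cong refl) (simp add: algebra_simps)
  finally show ?thesis .
qed

lemma pair_block_sq_corner_sum_ge:
  assumes "T \<in> Sp n" "K \<le> n" "L \<le> n"
  shows "2 * real K + 2 * real L - 2 * real n \<le> (\<Sum>i<K. \<Sum>j<L. pair_block_sq n T i j)"
proof -
  have "(\<Sum>b\<in>pair_indices n K. \<Sum>a\<in>pair_indices n L. (T $$ (b, a))\<^sup>2)
      = (\<Sum>i<K. \<Sum>j<L. pair_block_sq n T i j)"
    unfolding sum_pair_indices[OF assms(2)] sum_pair_indices[OF assms(3)] pair_block_sq_def
    by (simp add: sum.distrib algebra_simps)
  then show ?thesis
    using Sp_corner_sq_sum_ge[OF assms] by simp
qed

definition reversal_mat :: "nat \<Rightarrow> real mat" where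
  "reversal_mat n = mat n n (\<lambda>(i, j). if i + j = n - 1 then 1 else 0)"

lemma reversal_mat_carrier [simp]: "reversal_mat n \<in> carrier_mat n n"
  unfolding reversal_mat_def by auto

lemma reversal_mat_orthogonal: "(reversal_mat n)\<^sup>T * reversal_mat n = 1\<^sub>m n"
proof (rule eq_matI)
  fix i j assume i: "i < dim_row (1\<^sub>m n)" and j: "j < dim_col (1\<^sub>m n)"
  have "((reversal_mat n)\<^sup>T * reversal_mat n) $$ (i, j)
      = (\<Sum>k<n. (if k + i = n - 1 then 1 else 0) * (if k + j = n - 1 then 1 else 0))"
    using i j by (simp add: reversal_mat_def scalar_prod_def lessThan_atLeast0)
  also have "\<dots> = (\<Sum>k<n. if k = n - 1 - i then (if k + j = n - 1 then 1 else 0) else 0)"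
    using i by (intro sum.cong) auto
  also have "\<dots> = 1\<^sub>m n $$ (i, j)"
    using i j by auto
  finally show "((reversal_mat n)\<^sup>T * reversal_mat n) $$ (i, j) = 1\<^sub>m n $$ (i, j)" .
qed (auto simp: reversal_mat_def)

definition sp_reversal :: "nat \<Rightarrow> real mat" where
  "sp_reversal n = four_block_mat (reversal_mat n) (0\<^sub>m n n) (0\<^sub>m n n) (reversal_mat n)"

lemma sp_reversal_in_Sp: "sp_reversal n \<in> Sp n"
  unfolding sp_reversal_def
  by (rule block_diag_orthogonal_in_Sp[OF reversal_mat_carrier reversal_mat_orthogonal])

lemma pair_block_sq_sp_reversal:
  assumes "i < n" "j < n"
  shows "pair_block_sq n (sp_reversal n) i j = (if i + j = n - 1 then 2 else 0)"
  using assms unfolding pair_block_sq_def sp_reversal_def reversal_mat_def by auto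

lemma mat_trace_sp_reversal:
  "mat_trace (sp_reversal n * williamson_form n d * (sp_reversal n)\<^sup>T * williamson_form n e)
    = 2 * (\<Sum>i<n. e i * d (n - 1 - i))"
proof -
  have "mat_trace (sp_reversal n * williamson_form n d * (sp_reversal n)\<^sup>T * williamson_form n e)
      = (\<Sum>i<n. \<Sum>j<n. e i * d j * (if i + j = n - 1 then 2 else 0))"
    unfolding mat_trace_williamson_congruence[OF Sp_carrier[OF sp_reversal_in_Sp]]
    by (intro sum.cong refl) (simp add: pair_block_sq_sp_reversal)
  also have "\<dots> = 2 * (\<Sum>i<n. e i * d (n - 1 - i))"
    by (rule antidiagonal_weighted_sum)
  finally show ?thesis .
qed

lemma mat_trace_williamson_congruence_ge:
  assumes T: "T \<in> Sp n"
    and e_mono: "\<And>i j. i \<le> j \<Longrightarrow> j < n \<Longrightarrow> e j \<le> e i" and e_nonneg: "\<And>i. i < n \<Longrightarrow> 0 \<le> e i"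
    and d_mono: "\<And>i j. i \<le> j \<Longrightarrow> j < n \<Longrightarrow> d j \<le> d i" and d_nonneg: "\<And>i. i < n \<Longrightarrow> 0 \<le> d i"
  shows "2 * (\<Sum>i<n. e i * d (n - 1 - i))
    \<le> mat_trace (T * williamson_form n d * T\<^sup>T * williamson_form n e)"
proof -
  have corner: "(\<Sum>i<K. \<Sum>j<L. if i + j = n - 1 then 2 else 0) \<le> (\<Sum>i<K. \<Sum>j<L. pair_block_sq n T i j)"
    if "K \<le> n" "L \<le> n" for K L
  proof (cases "n \<le> K + L")
    case True
    then show ?thesis
      using antidiagonal_corner_sum[OF that] pair_block_sq_corner_sum_ge[OF T that] by simp
  next
    case False
    then show ?thesis
      using antidiagonal_corner_sum[OF that]
      by (simp add: sum_nonneg pair_block_sq_def)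
  qed
  have "(\<Sum>i<n. \<Sum>j<n. e i * d j * (if i + j = n - 1 then 2 else 0))
      \<le> (\<Sum>i<n. \<Sum>j<n. e i * d j * pair_block_sq n T i j)"
    using e_mono e_nonneg d_mono d_nonneg corner by (rule weighted_double_sum_mono)
  then show ?thesis
    unfolding antidiagonal_weighted_sum mat_trace_williamson_congruence[OF Sp_carrier[OF T]] .
qed

lemma INF_trace_williamson_congruence:
  assumes "\<And>i j. i \<le> j \<Longrightarrow> j < n \<Longrightarrow> e j \<le> e i" "\<And>i. i < n \<Longrightarrow> 0 \<le> e i"
    and "\<And>i j. i \<le> j \<Longrightarrow> j < n \<Longrightarrow> d j \<le> d i" "\<And>i. i < n \<Longrightarrow> 0 \<le> d i"
  shows "(INF T \<in> Sp n. mat_trace (T * williamson_form n d * T\<^sup>T * williamson_form n e))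
    = 2 * (\<Sum>i<n. e i * d (n - 1 - i))"
proof (rule cInf_eq_minimum)
  show "2 * (\<Sum>i<n. e i * d (n - 1 - i))
      \<in> (\<lambda>T. mat_trace (T * williamson_form n d * T\<^sup>T * williamson_form n e)) ` Sp n"
    using mat_trace_sp_reversal[symmetric] sp_reversal_in_Sp by (rule image_eqI)
  show "2 * (\<Sum>i<n. e i * d (n - 1 - i)) \<le> t"
    if "t \<in> (\<lambda>T. mat_trace (T * williamson_form n d * T\<^sup>T * williamson_form n e)) ` Sp n" for t
    using that mat_trace_williamson_congruence_ge[OF _ assms] by auto
qed

lemma symplectic_eigenvaluesE:
  assumes "symplectic_eigenvalues n M lam"
  obtains S where "S \<in> Sp n" "S\<^sup>T * M * S = williamson_form n (\<lambda>k. lam (k + 1))"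
    and "\<And>i j. i \<le> j \<Longrightarrow> j < n \<Longrightarrow> lam (j + 1) \<le> lam (i + 1)"
    and "\<And>i. i < n \<Longrightarrow> 0 \<le> lam (i + 1)"
proof -
  have mono: "\<And>i j. 1 \<le> i \<Longrightarrow> i \<le> j \<Longrightarrow> j \<le> n \<Longrightarrow> lam j \<le> lam i"
    and pos: "\<And>i. 1 \<le> i \<Longrightarrow> i \<le> n \<Longrightarrow> 0 < lam i"
    using assms unfolding symplectic_eigenvalues_def by blast+
  obtain S where "S \<in> Sp n" "S\<^sup>T * M * S = williamson_form n (\<lambda>k. lam (k + 1))"
    using assms unfolding symplectic_eigenvalues_def williamson_form_def by blast
  moreover have "lam (j + 1) \<le> lam (i + 1)" if "i \<le> j" "j < n" for i j
    using mono[of "i + 1" "j + 1"] that by simp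
  moreover have "0 \<le> lam (i + 1)" if "i < n" for i
    using pos[of "i + 1"] that by simp
  ultimately show ?thesis
    by (rule that)
qed

lemma sum_reverse_pairing_shift:
  fixes f g :: "nat \<Rightarrow> 'a :: comm_semiring_0" and n :: nat
  shows "(\<Sum>i = 1..n. f i * g (n + 1 - i)) = (\<Sum>i<n. f (i + 1) * g (n - 1 - i + 1))"
proof -
  have "{1..n} = Suc ` {..<n}"
    by (metis atLeastLessThanSuc_atLeastAtMost image_Suc_lessThan)
  then show ?thesis
    by (simp add: sum.reindex Suc_diff_Suc)
qed

lemma INF_trace_Sp_congruence:
  assumes Sv: "Sv \<in> Sp n" "Sv\<^sup>T * V * Sv = D" and Sh: "Sh \<in> Sp n" "Sh\<^sup>T * H * Sh = E"
    and carrier: "V \<in> carrier_mat (2*n) (2*n)" "H \<in> carrier_mat (2*n) (2*n)"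
      "D \<in> carrier_mat (2*n) (2*n)" "E \<in> carrier_mat (2*n) (2*n)"
  shows "(INF S \<in> Sp n. mat_trace (S * V * S\<^sup>T * H)) = (INF T \<in> Sp n. mat_trace (T * D * T\<^sup>T * E))"
proof -
  let ?Iv = "sp_inverse n Sv" and ?Ih = "sp_inverse n Sh"
  have V_eq: "V = ?Iv\<^sup>T * D * ?Iv"
    using Sp_carrier[OF Sv(1)] carrier
    by (intro congruence_eq_inverse[OF Sv(2) mult_sp_inverse[OF Sv(1)]]) simp_all
  have H_eq: "H = ?Ih\<^sup>T * E * ?Ih"
    using Sp_carrier[OF Sh(1)] carrier
    by (intro congruence_eq_inverse[OF Sh(2) mult_sp_inverse[OF Sh(1)]]) simp_all
  let ?reduce = "\<lambda>S. ?Ih * S * ?Iv\<^sup>T"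
  have "mat_trace (S * V * S\<^sup>T * H) = mat_trace (?reduce S * D * (?reduce S)\<^sup>T * E)"
    if "S \<in> Sp n" for S
    unfolding V_eq H_eq using that Sv(1) Sh(1) carrier
    by (intro mat_trace_congruence[where N="2*n"]) (simp_all add: Sp_carrier)
  then have "(INF S \<in> Sp n. mat_trace (S * V * S\<^sup>T * H))
      = (INF S \<in> Sp n. mat_trace (?reduce S * D * (?reduce S)\<^sup>T * E))"
    by (rule INF_cong[OF refl])
  also have "\<dots> = (INF T \<in> ?reduce ` Sp n. mat_trace (T * D * T\<^sup>T * E))"
    by (simp only: image_image)
  also have "?reduce ` Sp n = Sp n"
    using Sv(1) Sh(1) by (intro Sp_translate_image sp_inverse_in_Sp Sp_transpose)
  finally show ?thesis .
qed

theorem theorem1: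
  fixes n :: nat and V H :: "real mat" and lamV lamH :: "nat \<Rightarrow> real"
  assumes "n \<ge> 1"
    and "sym_pos_def (2*n) V" and "sym_pos_def (2*n) H"
    and "symplectic_eigenvalues n V lamV"
    and "symplectic_eigenvalues n H lamH"
  shows "(INF S \<in> Sp n. mat_trace (S * V * S\<^sup>T * H))
           = 2 * (\<Sum>i = 1..n. lamH i * lamV (n + 1 - i))"
proof -
  let ?d = "\<lambda>k. lamV (k + 1)" and ?e = "\<lambda>k. lamH (k + 1)"
  have "V \<in> carrier_mat (2*n) (2*n)" "H \<in> carrier_mat (2*n) (2*n)"
    using assms(2,3) unfolding sym_pos_def_def by auto
  moreover obtain Sv where "Sv \<in> Sp n" "Sv\<^sup>T * V * Sv = williamson_form n ?d"
    and d: "\<And>i j. i \<le> j \<Longrightarrow> j < n \<Longrightarrow> ?d j \<le> ?d i" "\<And>i. i < n \<Longrightarrow> 0 \<le> ?d i"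
    using assms(4) by (rule symplectic_eigenvaluesE) (rule that)
  moreover obtain Sh where "Sh \<in> Sp n" "Sh\<^sup>T * H * Sh = williamson_form n ?e"
    and e: "\<And>i j. i \<le> j \<Longrightarrow> j < n \<Longrightarrow> ?e j \<le> ?e i" "\<And>i. i < n \<Longrightarrow> 0 \<le> ?e i"
    using assms(5) by (rule symplectic_eigenvaluesE) (rule that)
  ultimately have "(INF S \<in> Sp n. mat_trace (S * V * S\<^sup>T * H))
      = (INF T \<in> Sp n. mat_trace (T * williamson_form n ?d * T\<^sup>T * williamson_form n ?e))"
    by (intro INF_trace_Sp_congruence) simp_all
  also have "\<dots> = 2 * (\<Sum>i<n. ?e i * ?d (n - 1 - i))"
    using e d by (rule INF_trace_williamson_congruence)
  finally show ?thesis
    by (simp only: sum_reverse_pairing_shift)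
qed

end
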